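(* Let $(\Lambda,d)$ be a $k$-graph and let $\sim$ be an equivalence relation on (the set of morphisms of) $\Lambda$ with the following properties: (1) if $\mu \sim \nu$ then $d(\mu) = d(\nu)$; (2) if $\alpha \sim \alpha'$ and $\beta \sim \beta'$ with $r(\beta) = s(\alpha)$ and $r(\beta') = s(\alpha')$, then $\alpha\beta \sim \alpha'\beta'$; (3) if $\alpha\beta \sim \alpha'\beta'$ (both composable pairs) and $d(\alpha) = d(\alpha')$, then $\alpha \sim \alpha'$ and $\beta \sim \beta'$; (4) if $s(\alpha) \sim r(\beta)$, then there exist $\alpha', \beta'$ such that $\alpha' \sim \alpha$, $\beta'\sim\beta$ and $s(\alpha') = r(\beta')$. Then the formulas $d([\mu]) = d(\mu)$, $r([\mu]) = [r(\mu)]$, $s([\mu]) = [s(\mu)]$, and $[\lambda][\mu] = [\alpha\beta]$ (for any $\alpha\in[\lambda]$, $\beta\in[\mu]$ with $s(\alpha)=r(\beta)$, whenever $[s(\lambda)]=[r(\mu)]$) are well defined, and with these structure maps the quotient $\Lambda/{\sim}$ is a $k$-graph.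
   Context: For $k\ge 0$, $\mathbb{N}^k$ is the additive monoid with generators $e_1,\dots,e_k$ ($\mathbb{N}^0=\{0\}$). A $k$-graph is a countable small category $\Lambda$ together with a functor $d:\Lambda\to\mathbb{N}^k$ (the degree map) satisfying the factorisation property: writing $\Lambda^n=d^{-1}(n)$, for all $m,n\in\mathbb{N}^k$ the composition map $(\mu,\nu)\mapsto\mu\nu$ is a bijection from $\{(\mu,\nu)\in\Lambda^m\times\Lambda^n : s(\mu)=r(\nu)\}$ onto $\Lambda^{m+n}$. Objects are identified with their identity morphisms, so $\Lambda^0$ is the set of vertices, and $r,s:\Lambda\to\Lambda^0$ are the range (codomain) and source (domain) maps. $k$-graphs are assumed nonempty. $[\lambda]$ denotes the $\sim$-equivalence class of $\lambda$. *)

theory Defs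
  imports Main "HOL-Library.Countable_Set"
begin

text \<open>N^k is represented as functions nat => nat vanishing at indices >= k;
  the generator e_i (i < k) is the indicator of i. Addition is pointwise.\<close>

definition Nk :: "nat \<Rightarrow> (nat \<Rightarrow> nat) set" where
  "Nk k = {n. \<forall>i\<ge>k. n i = 0}"

definition addk :: "(nat \<Rightarrow> nat) \<Rightarrow> (nat \<Rightarrow> nat) \<Rightarrow> (nat \<Rightarrow> nat)" where
  "addk m n = (\<lambda>i. m i + n i)"

text \<open>A small category with morphism set M, objects identified with identity
  morphisms, range r (codomain), source s (domain), composition c (c mu nu = mu nu,
  defined when s mu = r nu).\<close>

definition is_category :: "'a set \<Rightarrow> ('a \<Rightarrow> 'a) \<Rightarrow> ('a \<Rightarrow> 'a) \<Rightarrow> ('a \<Rightarrow> 'a \<Rightarrow> 'a) \<Rightarrow> bool" where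
  "is_category M r s c \<longleftrightarrow>
     (\<forall>\<mu>\<in>M. r \<mu> \<in> M \<and> s \<mu> \<in> M \<and>
        r (r \<mu>) = r \<mu> \<and> s (r \<mu>) = r \<mu> \<and> r (s \<mu>) = s \<mu> \<and> s (s \<mu>) = s \<mu> \<and>
        c (r \<mu>) \<mu> = \<mu> \<and> c \<mu> (s \<mu>) = \<mu>) \<and>
     (\<forall>\<mu>\<in>M. \<forall>\<nu>\<in>M. s \<mu> = r \<nu> \<longrightarrow>
        c \<mu> \<nu> \<in> M \<and> r (c \<mu> \<nu>) = r \<mu> \<and> s (c \<mu> \<nu>) = s \<nu>) \<and>
     (\<forall>\<mu>\<in>M. \<forall>\<nu>\<in>M. \<forall>\<rho>\<in>M. s \<mu> = r \<nu> \<longrightarrow> s \<nu> = r \<rho> \<longrightarrow>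
        c (c \<mu> \<nu>) \<rho> = c \<mu> (c \<nu> \<rho>))"

definition is_kgraph :: "nat \<Rightarrow> 'a set \<Rightarrow> ('a \<Rightarrow> 'a) \<Rightarrow> ('a \<Rightarrow> 'a) \<Rightarrow> ('a \<Rightarrow> 'a \<Rightarrow> 'a)
    \<Rightarrow> ('a \<Rightarrow> nat \<Rightarrow> nat) \<Rightarrow> bool" where
  "is_kgraph k M r s c d \<longleftrightarrow>
     M \<noteq> {} \<and> countable M \<and> is_category M r s c \<and>
     (\<forall>\<mu>\<in>M. d \<mu> \<in> Nk k) \<and>
     (\<forall>\<mu>\<in>M. r \<mu> = \<mu> \<longrightarrow> d \<mu> = (\<lambda>_. 0)) \<and>
     (\<forall>\<mu>\<in>M. \<forall>\<nu>\<in>M. s \<mu> = r \<nu> \<longrightarrow> d (c \<mu> \<nu>) = addk (d \<mu>) (d \<nu>)) \<and>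
     (\<forall>\<xi>\<in>M. \<forall>m\<in>Nk k. \<forall>n\<in>Nk k. d \<xi> = addk m n \<longrightarrow>
        (\<exists>!p. fst p \<in> M \<and> snd p \<in> M \<and> s (fst p) = r (snd p) \<and>
              d (fst p) = m \<and> d (snd p) = n \<and> c (fst p) (snd p) = \<xi>))"

definition qdeg :: "('a \<Rightarrow> nat \<Rightarrow> nat) \<Rightarrow> 'a set \<Rightarrow> nat \<Rightarrow> nat" where
  "qdeg d X = d (SOME \<mu>. \<mu> \<in> X)"

definition qmap :: "('a \<times> 'a) set \<Rightarrow> ('a \<Rightarrow> 'a) \<Rightarrow> 'a set \<Rightarrow> 'a set" where
  "qmap R f X = R `` {f (SOME \<mu>. \<mu> \<in> X)}"

definition qcomp :: "('a \<times> 'a) set \<Rightarrow> ('a \<Rightarrow> 'a) \<Rightarrow> ('a \<Rightarrow> 'a) \<Rightarrow> ('a \<Rightarrow> 'a \<Rightarrow> 'a)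
    \<Rightarrow> 'a set \<Rightarrow> 'a set \<Rightarrow> 'a set" where
  "qcomp R r s c X Y =
     (let p = (SOME p. fst p \<in> X \<and> snd p \<in> Y \<and> s (fst p) = r (snd p))
      in R `` {c (fst p) (snd p)})"

end

theory Submission
  imports Defs
begin

text \<open>Conditions (1) and (3), applied to the factorisations \<open>\<mu> = r(\<mu>) \<mu> = \<mu> s(\<mu>)\<close>, show that
  \<open>r\<close> and \<open>s\<close> respect \<open>\<sim>\<close>; (2) makes composition of classes independent of the
  representatives, and (4) supplies composable representatives. The unique factorisation
  property passes to the quotient because, by (3), a factorisation of any element of the class
  \<open>[\<alpha>\<beta>]\<close> into degrees \<open>(d \<alpha>, d \<beta>)\<close> has factors in \<open>[\<alpha>]\<close> and \<open>[\<beta>]\<close>. The same observation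
  lifts associativity: \<open>([\<alpha>][\<beta>])[\<gamma>]\<close> is computed from some \<open>\<delta>\<gamma>\<close> with \<open>\<delta> \<sim> \<alpha>\<beta>\<close>, and
  factoring \<open>\<delta> = \<alpha>'\<beta>'\<close> lets us rebracket inside \<open>\<Lambda>\<close>.\<close>

lemma some_in_class:
  assumes "equiv M R" and "\<mu> \<in> M"
  shows "(\<mu>, SOME x. x \<in> R``{\<mu>}) \<in> R"
  using someI[of "\<lambda>x. x \<in> R``{\<mu>}", OF equiv_class_self[OF assms]] by simp

lemma same_class_related:
  assumes "equiv M R" and "x \<in> R``{\<xi>}" and "y \<in> R``{\<xi>}"
  shows "(x, y) \<in> R"
  using assms by (metis Image_singleton_iff equiv_class_eq_iff)

lemma qdeg_equiv_class:
  assumes "equiv M R" and "d respects R" and "\<mu> \<in> M"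
  shows "qdeg d (R``{\<mu>}) = d \<mu>"
  unfolding qdeg_def using some_in_class[OF assms(1,3)] assms(2) by (metis congruentD)

lemma qmap_equiv_class:
  assumes "equiv M R" and "\<And>a b. (a, b) \<in> R \<Longrightarrow> (f a, f b) \<in> R" and "\<mu> \<in> M"
  shows "qmap R f (R``{\<mu>}) = R``{f \<mu>}"
  unfolding qmap_def
  using some_in_class[OF assms(1,3)] assms(1,2) by (metis equiv_class_eq)

lemma qcomp_equiv_class:
  assumes equiv: "equiv M R"
    and comp: "\<And>\<alpha> \<alpha>' \<beta> \<beta>'. (\<alpha>, \<alpha>') \<in> R \<Longrightarrow> (\<beta>, \<beta>') \<in> R \<Longrightarrow>
                 r \<beta> = s \<alpha> \<Longrightarrow> r \<beta>' = s \<alpha>' \<Longrightarrow> (c \<alpha> \<beta>, c \<alpha>' \<beta>') \<in> R"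
    and "\<alpha> \<in> R``{\<xi>}" "\<beta> \<in> R``{\<mu>}" "s \<alpha> = r \<beta>"
  shows "qcomp R r s c (R``{\<xi>}) (R``{\<mu>}) = R``{c \<alpha> \<beta>}"
proof -
  define P where "P p \<longleftrightarrow> fst p \<in> R``{\<xi>} \<and> snd p \<in> R``{\<mu>} \<and> s (fst p) = r (snd p)" for p
  have "P (\<alpha>, \<beta>)"
    using assms(3-5) by (simp add: P_def)
  then have p: "P (SOME p. P p)"
    by (rule someI)
  obtain \<alpha>' \<beta>' where some: "(SOME p. P p) = (\<alpha>', \<beta>')"
    by (rule prod.exhaust)
  with p have "\<alpha>' \<in> R``{\<xi>}" "\<beta>' \<in> R``{\<mu>}" and composable: "s \<alpha>' = r \<beta>'"
    by (simp_all add: P_def)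
  then have "(\<alpha>', \<alpha>) \<in> R" "(\<beta>', \<beta>) \<in> R"
    using assms(3,4) same_class_related[OF equiv] by blast+
  then have "(c \<alpha>' \<beta>', c \<alpha> \<beta>) \<in> R"
    using assms(5) composable comp by metis
  then show ?thesis
    unfolding qcomp_def Let_def P_def[symmetric] some using equiv by (simp add: equiv_class_eq)
qed

locale kgraph =
  fixes k :: nat and M :: "'a set" and r s :: "'a \<Rightarrow> 'a"
    and c :: "'a \<Rightarrow> 'a \<Rightarrow> 'a" and d :: "'a \<Rightarrow> nat \<Rightarrow> nat"
  assumes kgraph: "is_kgraph k M r s c d"
begin

lemma nonempty: "M \<noteq> {}"
  and countable: "countable M"
  and degree_in_Nk: "\<mu> \<in> M \<Longrightarrow> d \<mu> \<in> Nk k"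
  and degree_vertex: "\<mu> \<in> M \<Longrightarrow> r \<mu> = \<mu> \<Longrightarrow> d \<mu> = (\<lambda>_. 0)"
  and degree_comp: "\<mu> \<in> M \<Longrightarrow> \<nu> \<in> M \<Longrightarrow> s \<mu> = r \<nu> \<Longrightarrow> d (c \<mu> \<nu>) = addk (d \<mu>) (d \<nu>)"
  using kgraph unfolding is_kgraph_def by blast+

lemma unique_factorization:
  "\<xi> \<in> M \<Longrightarrow> m \<in> Nk k \<Longrightarrow> n \<in> Nk k \<Longrightarrow> d \<xi> = addk m n \<Longrightarrow>
   \<exists>!p. fst p \<in> M \<and> snd p \<in> M \<and> s (fst p) = r (snd p) \<and>
        d (fst p) = m \<and> d (snd p) = n \<and> c (fst p) (snd p) = \<xi>"
  using kgraph unfolding is_kgraph_def by blast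

lemma range_in [simp]: "\<mu> \<in> M \<Longrightarrow> r \<mu> \<in> M"
  and source_in [simp]: "\<mu> \<in> M \<Longrightarrow> s \<mu> \<in> M"
  and range_range [simp]: "\<mu> \<in> M \<Longrightarrow> r (r \<mu>) = r \<mu>"
  and source_range [simp]: "\<mu> \<in> M \<Longrightarrow> s (r \<mu>) = r \<mu>"
  and range_source [simp]: "\<mu> \<in> M \<Longrightarrow> r (s \<mu>) = s \<mu>"
  and source_source [simp]: "\<mu> \<in> M \<Longrightarrow> s (s \<mu>) = s \<mu>"
  and comp_range_left [simp]: "\<mu> \<in> M \<Longrightarrow> c (r \<mu>) \<mu> = \<mu>"
  and comp_source_right [simp]: "\<mu> \<in> M \<Longrightarrow> c \<mu> (s \<mu>) = \<mu>"
  and comp_in [simp]: "\<mu> \<in> M \<Longrightarrow> \<nu> \<in> M \<Longrightarrow> s \<mu> = r \<nu> \<Longrightarrow> c \<mu> \<nu> \<in> M"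
  and range_comp [simp]: "\<mu> \<in> M \<Longrightarrow> \<nu> \<in> M \<Longrightarrow> s \<mu> = r \<nu> \<Longrightarrow> r (c \<mu> \<nu>) = r \<mu>"
  and source_comp [simp]: "\<mu> \<in> M \<Longrightarrow> \<nu> \<in> M \<Longrightarrow> s \<mu> = r \<nu> \<Longrightarrow> s (c \<mu> \<nu>) = s \<nu>"
  and comp_assoc: "\<mu> \<in> M \<Longrightarrow> \<nu> \<in> M \<Longrightarrow> \<rho> \<in> M \<Longrightarrow> s \<mu> = r \<nu> \<Longrightarrow> s \<nu> = r \<rho> \<Longrightarrow>
     c (c \<mu> \<nu>) \<rho> = c \<mu> (c \<nu> \<rho>)"
  using kgraph unfolding is_kgraph_def is_category_def by blast+

end

locale kgraph_congruence = kgraph +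
  fixes R :: "('a \<times> 'a) set"
  assumes equiv: "equiv M R"
    and congruence_degree: "\<And>\<mu> \<nu>. (\<mu>, \<nu>) \<in> R \<Longrightarrow> d \<mu> = d \<nu>"
    and congruence_comp: "\<And>\<alpha> \<alpha>' \<beta> \<beta>'. (\<alpha>, \<alpha>') \<in> R \<Longrightarrow> (\<beta>, \<beta>') \<in> R \<Longrightarrow>
               r \<beta> = s \<alpha> \<Longrightarrow> r \<beta>' = s \<alpha>' \<Longrightarrow> (c \<alpha> \<beta>, c \<alpha>' \<beta>') \<in> R"
    and congruence_cancel: "\<And>\<alpha> \<alpha>' \<beta> \<beta>'. \<alpha> \<in> M \<Longrightarrow> \<beta> \<in> M \<Longrightarrow> \<alpha>' \<in> M \<Longrightarrow> \<beta>' \<in> M \<Longrightarrow>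
               s \<alpha> = r \<beta> \<Longrightarrow> s \<alpha>' = r \<beta>' \<Longrightarrow> (c \<alpha> \<beta>, c \<alpha>' \<beta>') \<in> R \<Longrightarrow>
               d \<alpha> = d \<alpha>' \<Longrightarrow> (\<alpha>, \<alpha>') \<in> R \<and> (\<beta>, \<beta>') \<in> R"
    and congruence_lift: "\<And>\<alpha> \<beta>. \<alpha> \<in> M \<Longrightarrow> \<beta> \<in> M \<Longrightarrow> (s \<alpha>, r \<beta>) \<in> R \<Longrightarrow>
               \<exists>\<alpha>' \<beta>'. (\<alpha>', \<alpha>) \<in> R \<and> (\<beta>', \<beta>) \<in> R \<and> s \<alpha>' = r \<beta>'"
begin

lemma related_in: "(\<mu>, \<nu>) \<in> R \<Longrightarrow> \<mu> \<in> M \<and> \<nu> \<in> M"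
  using equiv_type[OF equiv] by blast

lemma related_refl [simp]: "\<mu> \<in> M \<Longrightarrow> (\<mu>, \<mu>) \<in> R"
  using equiv by (simp add: equiv_class_eq_iff)

lemma related_iff_class_eq: "\<mu> \<in> M \<Longrightarrow> \<nu> \<in> M \<Longrightarrow> (\<mu>, \<nu>) \<in> R \<longleftrightarrow> R``{\<mu>} = R``{\<nu>}"
  using eq_equiv_class_iff[OF equiv] by simp

lemma range_congruence:
  assumes "(\<mu>, \<nu>) \<in> R"
  shows "(r \<mu>, r \<nu>) \<in> R"
proof -
  have M: "\<mu> \<in> M" "\<nu> \<in> M"
    using related_in[OF assms] by auto
  then have "(c (r \<mu>) \<mu>, c (r \<nu>) \<nu>) \<in> R" "d (r \<mu>) = d (r \<nu>)"
    using assms degree_vertex by simp_all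
  then show ?thesis
    using congruence_cancel[of "r \<mu>" \<mu> "r \<nu>" \<nu>] M by simp
qed

lemma source_congruence:
  assumes "(\<mu>, \<nu>) \<in> R"
  shows "(s \<mu>, s \<nu>) \<in> R"
proof -
  have M: "\<mu> \<in> M" "\<nu> \<in> M"
    using related_in[OF assms] by auto
  then have "(c \<mu> (s \<mu>), c \<nu> (s \<nu>)) \<in> R"
    using assms by simp
  then show ?thesis
    using congruence_cancel[of \<mu> "s \<mu>" \<nu> "s \<nu>"] congruence_degree[OF assms] M by simp
qed

lemma qdeg_class [simp]: "\<mu> \<in> M \<Longrightarrow> qdeg d (R``{\<mu>}) = d \<mu>"
  by (rule qdeg_equiv_class[OF equiv congruentI[OF congruence_degree]])

lemma qmap_range_class [simp]: "\<mu> \<in> M \<Longrightarrow> qmap R r (R``{\<mu>}) = R``{r \<mu>}"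
  using qmap_equiv_class[OF equiv range_congruence] .

lemma qmap_source_class [simp]: "\<mu> \<in> M \<Longrightarrow> qmap R s (R``{\<mu>}) = R``{s \<mu>}"
  using qmap_equiv_class[OF equiv source_congruence] .

lemma comp_classes_congruence:
  "\<alpha> \<in> R``{\<xi>} \<Longrightarrow> \<beta> \<in> R``{\<mu>} \<Longrightarrow> \<alpha>' \<in> R``{\<xi>} \<Longrightarrow> \<beta>' \<in> R``{\<mu>} \<Longrightarrow>
   s \<alpha> = r \<beta> \<Longrightarrow> s \<alpha>' = r \<beta>' \<Longrightarrow> (c \<alpha> \<beta>, c \<alpha>' \<beta>') \<in> R"
  using same_class_related[OF equiv] congruence_comp by metis

lemma qcomp_class:
  "\<alpha> \<in> R``{\<xi>} \<Longrightarrow> \<beta> \<in> R``{\<mu>} \<Longrightarrow> s \<alpha> = r \<beta> \<Longrightarrow>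
   qcomp R r s c (R``{\<xi>}) (R``{\<mu>}) = R``{c \<alpha> \<beta>}"
  using qcomp_equiv_class[OF equiv congruence_comp] .

lemma qcomp_composable [simp]:
  "\<alpha> \<in> M \<Longrightarrow> \<beta> \<in> M \<Longrightarrow> s \<alpha> = r \<beta> \<Longrightarrow> qcomp R r s c (R``{\<alpha>}) (R``{\<beta>}) = R``{c \<alpha> \<beta>}"
  by (simp add: qcomp_class)

lemma classes_composable:
  assumes "\<xi> \<in> M" and "\<mu> \<in> M" and "(s \<xi>, r \<mu>) \<in> R"
  shows "\<exists>\<alpha>\<in>R``{\<xi>}. \<exists>\<beta>\<in>R``{\<mu>}. s \<alpha> = r \<beta>"
  using congruence_lift[OF assms] equiv by (metis Image_singleton_iff equiv_class_eq_iff)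

lemma factor_congruent:
  assumes "(\<xi>, c \<alpha> \<beta>) \<in> R" and "\<alpha> \<in> M" and "\<beta> \<in> M" and "s \<alpha> = r \<beta>"
  obtains \<alpha>' \<beta>' where "\<alpha>' \<in> M" "\<beta>' \<in> M" "s \<alpha>' = r \<beta>'" "c \<alpha>' \<beta>' = \<xi>"
    and "(\<alpha>', \<alpha>) \<in> R" and "(\<beta>', \<beta>) \<in> R"
proof -
  have "\<xi> \<in> M"
    using related_in[OF assms(1)] by simp
  moreover have "d \<xi> = addk (d \<alpha>) (d \<beta>)"
    using congruence_degree[OF assms(1)] degree_comp assms(2-4) by simp
  ultimately obtain p where p: "fst p \<in> M" "snd p \<in> M" "s (fst p) = r (snd p)"
      "d (fst p) = d \<alpha>" "c (fst p) (snd p) = \<xi>"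
    using unique_factorization degree_in_Nk assms(2,3) by blast
  moreover have "(fst p, \<alpha>) \<in> R \<and> (snd p, \<beta>) \<in> R"
    using congruence_cancel[of "fst p" "snd p" \<alpha> \<beta>] p assms by simp
  ultimately show ?thesis
    using that by blast
qed

lemma composable_classesE:
  assumes "X \<in> M // R" and "Y \<in> M // R" and "qmap R s X = qmap R r Y"
  obtains \<alpha> \<beta> where "\<alpha> \<in> M" "\<beta> \<in> M" "X = R``{\<alpha>}" "Y = R``{\<beta>}" "s \<alpha> = r \<beta>"
proof -
  obtain \<xi> \<mu> where X: "X = R``{\<xi>}" "\<xi> \<in> M" and Y: "Y = R``{\<mu>}" "\<mu> \<in> M"
    using assms(1,2) by (auto elim!: quotientE)
  then have "(s \<xi>, r \<mu>) \<in> R"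
    using assms(3) by (simp add: related_iff_class_eq)
  then obtain \<alpha> \<beta> where "(\<alpha>, \<xi>) \<in> R" "(\<beta>, \<mu>) \<in> R" "s \<alpha> = r \<beta>"
    using congruence_lift X Y by blast
  then show ?thesis
    using that X Y related_in equiv_class_eq[OF equiv] by metis
qed

lemma quotient_category: "is_category (M // R) (qmap R r) (qmap R s) (qcomp R r s c)"
proof -
  have identities: "\<forall>X\<in>M // R. qmap R r X \<in> M // R \<and> qmap R s X \<in> M // R \<and>
      qmap R r (qmap R r X) = qmap R r X \<and> qmap R s (qmap R r X) = qmap R r X \<and>
      qmap R r (qmap R s X) = qmap R s X \<and> qmap R s (qmap R s X) = qmap R s X \<and>
      qcomp R r s c (qmap R r X) X = X \<and> qcomp R r s c X (qmap R s X) = X"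
    by (auto elim!: quotientE simp: quotientI)
  have composition: "qcomp R r s c X Y \<in> M // R \<and> qmap R r (qcomp R r s c X Y) = qmap R r X \<and>
      qmap R s (qcomp R r s c X Y) = qmap R s Y"
    if "X \<in> M // R" "Y \<in> M // R" "qmap R s X = qmap R r Y" for X Y
    by (rule composable_classesE[OF that]) (simp add: quotientI)
  have associativity:
    "qcomp R r s c (qcomp R r s c X Y) Z = qcomp R r s c X (qcomp R r s c Y Z)"
    if classes: "X \<in> M // R" "Y \<in> M // R" "Z \<in> M // R"
      and composable: "qmap R s X = qmap R r Y" "qmap R s Y = qmap R r Z" for X Y Z
  proof -
    obtain \<alpha> \<beta> where ab: "\<alpha> \<in> M" "\<beta> \<in> M" "X = R``{\<alpha>}" "Y = R``{\<beta>}" "s \<alpha> = r \<beta>"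
      using classes(1,2) composable(1) by (rule composable_classesE)
    have "qcomp R r s c X Y \<in> M // R" "qmap R s (qcomp R r s c X Y) = qmap R r Z"
      using ab composable(2) by (simp_all add: quotientI)
    then obtain \<delta> \<gamma> where dg: "\<delta> \<in> M" "\<gamma> \<in> M" "R``{c \<alpha> \<beta>} = R``{\<delta>}" "Z = R``{\<gamma>}"
        "s \<delta> = r \<gamma>"
      using classes(3) ab by (auto elim: composable_classesE)
    then have "(\<delta>, c \<alpha> \<beta>) \<in> R"
      using ab by (simp add: related_iff_class_eq)
    then obtain \<alpha>' \<beta>' where a'b': "\<alpha>' \<in> M" "\<beta>' \<in> M" "s \<alpha>' = r \<beta>'" "\<delta> = c \<alpha>' \<beta>'"
        "X = R``{\<alpha>'}" "Y = R``{\<beta>'}"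
      using ab by (elim factor_congruent) (auto simp: related_iff_class_eq)
    have "s \<beta>' = r \<gamma>"
      using a'b' dg by simp
    then have "qcomp R r s c (qcomp R r s c X Y) Z = R``{c (c \<alpha>' \<beta>') \<gamma>}"
      using ab dg a'b' by simp
    also have "\<dots> = R``{c \<alpha>' (c \<beta>' \<gamma>)}"
      using comp_assoc a'b' dg \<open>s \<beta>' = r \<gamma>\<close> by simp
    also have "\<dots> = qcomp R r s c X (qcomp R r s c Y Z)"
      using a'b' dg \<open>s \<beta>' = r \<gamma>\<close> by simp
    finally show ?thesis .
  qed
  show ?thesis
    unfolding is_category_def using identities composition associativity by simp
qed

lemma quotient_unique_factorization:
  assumes "Z \<in> M // R" and "m \<in> Nk k" and "n \<in> Nk k" and "qdeg d Z = addk m n"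
  shows "\<exists>!p. fst p \<in> M // R \<and> snd p \<in> M // R \<and> qmap R s (fst p) = qmap R r (snd p) \<and>
           qdeg d (fst p) = m \<and> qdeg d (snd p) = n \<and> qcomp R r s c (fst p) (snd p) = Z"
    (is "\<exists>!p. ?factor p")
proof -
  obtain \<xi> where Z: "Z = R``{\<xi>}" "\<xi> \<in> M"
    using assms(1) by (rule quotientE)
  then obtain \<alpha> \<beta> where ab: "\<alpha> \<in> M" "\<beta> \<in> M" "s \<alpha> = r \<beta>" "d \<alpha> = m" "d \<beta> = n" "c \<alpha> \<beta> = \<xi>"
    using unique_factorization[of \<xi> m n] assms(2-4) by auto
  show ?thesis
  proof
    show "?factor (R``{\<alpha>}, R``{\<beta>})"
      using ab Z by (simp add: quotientI)
  next
    fix p assume p: "?factor p"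
    then have "fst p \<in> M // R" "snd p \<in> M // R" "qmap R s (fst p) = qmap R r (snd p)"
      by simp_all
    then obtain \<alpha>' \<beta>' where a'b': "\<alpha>' \<in> M" "\<beta>' \<in> M" "fst p = R``{\<alpha>'}" "snd p = R``{\<beta>'}"
        "s \<alpha>' = r \<beta>'"
      by (rule composable_classesE)
    with p have "(c \<alpha>' \<beta>', c \<alpha> \<beta>) \<in> R" "d \<alpha>' = d \<alpha>"
      using ab Z by (simp_all add: related_iff_class_eq)
    then have "(\<alpha>', \<alpha>) \<in> R" "(\<beta>', \<beta>) \<in> R"
      using congruence_cancel a'b' ab by blast+
    then show "p = (R``{\<alpha>}, R``{\<beta>})"
      using a'b' ab by (simp add: prod_eq_iff related_iff_class_eq)
  qed
qed

lemma quotient_kgraph: "is_kgraph k (M // R) (qmap R r) (qmap R s) (qcomp R r s c) (qdeg d)"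
proof -
  have "countable (M // R)"
    using countable unfolding quotient_def by auto
  moreover have "\<forall>X\<in>M // R. qdeg d X \<in> Nk k"
    by (auto elim!: quotientE simp: degree_in_Nk)
  moreover have "qdeg d X = (\<lambda>_. 0)" if in_quotient: "X \<in> M // R" and vertex: "qmap R r X = X" for X
  proof -
    obtain \<mu> where X: "X = R``{\<mu>}" "\<mu> \<in> M"
      using in_quotient by (rule quotientE)
    then have "(r \<mu>, \<mu>) \<in> R"
      using vertex by (simp add: related_iff_class_eq)
    then have "d \<mu> = d (r \<mu>)"
      by (simp add: congruence_degree)
    then show ?thesis
      using X degree_vertex by simp
  qed
  moreover have "qdeg d (qcomp R r s c X Y) = addk (qdeg d X) (qdeg d Y)"
    if "X \<in> M // R" "Y \<in> M // R" "qmap R s X = qmap R r Y" for X Y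
    by (rule composable_classesE[OF that]) (simp add: degree_comp)
  ultimately show ?thesis
    unfolding is_kgraph_def using nonempty quotient_category quotient_unique_factorization by simp
qed

end

theorem proposition2p1:
  fixes k :: nat and M :: "'a set" and r s :: "'a \<Rightarrow> 'a"
    and c :: "'a \<Rightarrow> 'a \<Rightarrow> 'a" and d :: "'a \<Rightarrow> nat \<Rightarrow> nat"
    and R :: "('a \<times> 'a) set"
  assumes kg: "is_kgraph k M r s c d"
    and eq: "equiv M R"
    and h1: "\<And>\<mu> \<nu>. (\<mu>, \<nu>) \<in> R \<Longrightarrow> d \<mu> = d \<nu>"
    and h2: "\<And>\<alpha> \<alpha>' \<beta> \<beta>'. (\<alpha>, \<alpha>') \<in> R \<Longrightarrow> (\<beta>, \<beta>') \<in> R \<Longrightarrow>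
               r \<beta> = s \<alpha> \<Longrightarrow> r \<beta>' = s \<alpha>' \<Longrightarrow> (c \<alpha> \<beta>, c \<alpha>' \<beta>') \<in> R"
    and h3: "\<And>\<alpha> \<alpha>' \<beta> \<beta>'. \<alpha> \<in> M \<Longrightarrow> \<beta> \<in> M \<Longrightarrow> \<alpha>' \<in> M \<Longrightarrow> \<beta>' \<in> M \<Longrightarrow>
               s \<alpha> = r \<beta> \<Longrightarrow> s \<alpha>' = r \<beta>' \<Longrightarrow> (c \<alpha> \<beta>, c \<alpha>' \<beta>') \<in> R \<Longrightarrow>
               d \<alpha> = d \<alpha>' \<Longrightarrow> (\<alpha>, \<alpha>') \<in> R \<and> (\<beta>, \<beta>') \<in> R"
    and h4: "\<And>\<alpha> \<beta>. \<alpha> \<in> M \<Longrightarrow> \<beta> \<in> M \<Longrightarrow> (s \<alpha>, r \<beta>) \<in> R \<Longrightarrow>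
               \<exists>\<alpha>' \<beta>'. (\<alpha>', \<alpha>) \<in> R \<and> (\<beta>', \<beta>) \<in> R \<and> s \<alpha>' = r \<beta>'"
  shows
    "(\<forall>\<mu> \<nu>. (\<mu>, \<nu>) \<in> R \<longrightarrow> d \<mu> = d \<nu> \<and> (r \<mu>, r \<nu>) \<in> R \<and> (s \<mu>, s \<nu>) \<in> R) \<and>
     (\<forall>\<xi>\<in>M. \<forall>\<mu>\<in>M. (s \<xi>, r \<mu>) \<in> R \<longrightarrow>
        (\<exists>\<alpha>\<in>R `` {\<xi>}. \<exists>\<beta>\<in>R `` {\<mu>}. s \<alpha> = r \<beta>) \<and>
        (\<forall>\<alpha>\<in>R `` {\<xi>}. \<forall>\<beta>\<in>R `` {\<mu>}. \<forall>\<alpha>'\<in>R `` {\<xi>}. \<forall>\<beta>'\<in>R `` {\<mu>}.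
           s \<alpha> = r \<beta> \<longrightarrow> s \<alpha>' = r \<beta>' \<longrightarrow> (c \<alpha> \<beta>, c \<alpha>' \<beta>') \<in> R)) \<and>
     (\<forall>\<mu>\<in>M. qdeg d (R `` {\<mu>}) = d \<mu> \<and>
              qmap R r (R `` {\<mu>}) = R `` {r \<mu>} \<and> qmap R s (R `` {\<mu>}) = R `` {s \<mu>}) \<and>
     (\<forall>\<xi>\<in>M. \<forall>\<mu>\<in>M. (s \<xi>, r \<mu>) \<in> R \<longrightarrow>
        (\<forall>\<alpha>\<in>R `` {\<xi>}. \<forall>\<beta>\<in>R `` {\<mu>}. s \<alpha> = r \<beta> \<longrightarrow>
           qcomp R r s c (R `` {\<xi>}) (R `` {\<mu>}) = R `` {c \<alpha> \<beta>})) \<and>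
     is_kgraph k (M // R) (qmap R r) (qmap R s) (qcomp R r s c) (qdeg d)"
proof -
  interpret kgraph_congruence k M r s c d R
    using kg eq h1 h2 h3 h4 by unfold_locales
  show ?thesis
    using congruence_degree range_congruence source_congruence classes_composable
      comp_classes_congruence qcomp_class quotient_kgraph by simp
qed

end
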